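(* For all primes $p$, all integers $m,k$ and all integers $r\ge1$, $$\binom{p^rm-1}{k}(-1)^k\equiv\binom{p^{r-1}m-1}{\lfloor k/p\rfloor}(-1)^{\lfloor k/p\rfloor}\pmod{p^r}.$$
   Context: For all integers $n, k$, the binomial coefficient is defined by $\binom{n}{k} = \lim_{z \to 0} \frac{\Gamma(z+n+1)}{\Gamma(z+k+1)\Gamma(z+n-k+1)}$; this is a finite integer for all $n,k\in\mathbb{Z}$, agrees with the usual one for $n\ge0$, and satisfies $\binom{n}{k}=\binom{n}{n-k}$. $\lfloor x\rfloor$ denotes the floor function. *)

theory Defs
  imports "HOL-Analysis.Analysis"
begin

definition gbinom :: "int \<Rightarrow> int \<Rightarrow> real" where
  "gbinom n k = Lim (at (0::real))
     (\<lambda>z. Gamma (z + of_int n + 1) / (Gamma (z + of_int k + 1) * Gamma (z + of_int n - of_int k + 1)))"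

end

theory Submission
  imports Defs "HOL-Number_Theory.Cong"
begin

text \<open>Write \<open>p^r m = pM\<close>. For \<open>k \<ge> 0\<close> one has \<open>(-1)^k binom(pM-1, k) = \<Prod>j=1..k. (j - pM)/j\<close>. Since \<open>p^r\<close> divides
\<open>pM\<close>, the factors with \<open>j\<close> prime to \<open>p\<close> are units congruent to 1 modulo \<open>p^r\<close>, while the factors with
\<open>j = p i\<close> equal \<open>(i - M)/i\<close> and reassemble \<open>(-1)^q binom(M-1, q)\<close> for \<open>q = \<lfloor>k/p\<rfloor>\<close>.
Negative \<open>k\<close> reduce to this case by the reflection \<open>binom(n, k) = binom(n, n-k)\<close>, because
\<open>\<lfloor>(pM-1-k)/p\<rfloor> = M-1-\<lfloor>k/p\<rfloor>\<close>; the signs \<open>(-1)^(pM-1)\<close> and \<open>(-1)^(M-1)\<close> this introduces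
can differ only when \<open>p^r = 2\<close>. When \<open>k < 0\<close> and \<open>pM-1 < k\<close> both sides vanish.\<close>

text \<open>The integer instance of \<open>gchoose\<close>, which cannot be written directly on \<open>int\<close> because
\<open>Complex_Main\<close> restricts the input syntax of \<open>gbinomial\<close> to fields of characteristic 0.\<close>

definition int_binomial :: "int \<Rightarrow> nat \<Rightarrow> int" where
  "int_binomial a k = (\<Prod>i = 0..<k. a - int i) div fact k"

lemma fact_mult_int_binomial: "fact k * int_binomial a k = (\<Prod>i = 0..<k. a - int i)"
  unfolding int_binomial_def falling_fact_pochhammer' by (simp add: fact_dvd_pochhammer)

lemma of_int_int_binomial: "of_int (int_binomial a k) = (of_int a :: 'a::field_char_0) gchoose k"
proof -
  have "(fact k :: 'a) * of_int (int_binomial a k) = fact k * (of_int a gchoose k)"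
    using arg_cong[OF fact_mult_int_binomial[of k a], of "of_int :: int \<Rightarrow> 'a"]
    by (simp add: gbinomial_mult_fact)
  then show ?thesis by simp
qed

lemma fact_mult_signed_int_binomial:
  "fact k * ((-1) ^ k * int_binomial (a - 1) k) = (\<Prod>j = 1..k. int j - a)"
proof -
  have "(\<Prod>i<k. - (a - 1 - int i)) = (-1) ^ k * (\<Prod>i<k. a - 1 - int i)"
    by (subst prod_uminus) simp
  then have "fact k * ((-1) ^ k * int_binomial (a - 1) k) = (\<Prod>i<k. - (a - 1 - int i))"
    by (simp add: fact_mult_int_binomial atLeast0LessThan mult.left_commute)
  also have "\<dots> = (\<Prod>j = 1..k. int j - a)"
    by (simp add: prod.atLeast1_atMost_eq algebra_simps)
  finally show ?thesis .
qed

lemma eventually_at_zero_not_nonpos_Int: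
  "\<forall>\<^sub>F z in at (0::real). z + of_int j \<notin> \<int>\<^sub>\<le>\<^sub>0"
proof -
  have "\<forall>\<^sub>F z in at (0::real). z \<in> ball 0 1 - {0}"
    by (intro eventually_at_in_open) auto
  then show ?thesis
  proof (rule eventually_mono)
    fix z :: real assume z: "z \<in> ball 0 1 - {0}"
    show "z + of_int j \<notin> \<int>\<^sub>\<le>\<^sub>0"
    proof
      assume "z + of_int j \<in> \<int>\<^sub>\<le>\<^sub>0"
      then obtain i :: int where "z = of_int (i - j)"
        by (auto elim!: nonpos_Ints_cases simp: eq_diff_eq)
      with z have "\<bar>i - j\<bar> < 1" "i - j \<noteq> 0"
        by (auto simp: dist_real_def simp flip: of_int_abs)
      then show False by linarith
    qed
  qed
qed

lemma Lim_at_eq_if_eventually_eq_isCont: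
  fixes f g :: "'a::t2_space \<Rightarrow> 'b::t2_space"
  assumes "\<forall>\<^sub>F z in at a. f z = g z" and "isCont g a" and "at a \<noteq> bot"
  shows "Lim (at a) f = g a"
  using assms by (intro tendsto_Lim) (auto simp: isCont_def intro: tendsto_cong[THEN iffD2])

lemma gbinom_sym: "gbinom n (n - k) = gbinom n k"
  unfolding gbinom_def by (simp add: mult.commute algebra_simps)

lemma gbinom_of_nat: "gbinom n (int k) = of_int (int_binomial n k)"
proof -
  let ?g = "\<lambda>z::real. pochhammer (z + of_int n - of_nat k + 1) k * rGamma (z + of_nat k + 1)"
  have "\<forall>\<^sub>F z in at 0. Gamma (z + of_int n + 1) / (Gamma (z + of_int (int k) + 1)
          * Gamma (z + of_int n - of_int (int k) + 1)) = ?g z"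
    using eventually_at_zero_not_nonpos_Int[of "n + 1"]
  proof (rule eventually_mono)
    fix z :: real assume "z + of_int (n + 1) \<notin> \<int>\<^sub>\<le>\<^sub>0"
    then have Gamma_rGamma: "Gamma (z + of_int n + 1) * rGamma (z + of_int n + 1) = 1"
      by (simp add: rGamma_inverse_Gamma Gamma_eq_zero_iff add.assoc)
    have "Gamma (z + of_int n + 1) / (Gamma (z + of_int (int k) + 1)
          * Gamma (z + of_int n - of_int (int k) + 1))
        = Gamma (z + of_int n + 1) * rGamma (z + of_int n - of_nat k + 1) * rGamma (z + of_nat k + 1)"
      by (simp add: rGamma_inverse_Gamma divide_inverse)
    also have "rGamma (z + of_int n - of_nat k + 1)
        = pochhammer (z + of_int n - of_nat k + 1) k * rGamma (z + of_int n + 1)"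
      using pochhammer_rGamma[of "z + of_int n - of_nat k + 1" k] by (simp add: algebra_simps)
    finally show "Gamma (z + of_int n + 1) / (Gamma (z + of_int (int k) + 1)
          * Gamma (z + of_int n - of_int (int k) + 1)) = ?g z"
      using Gamma_rGamma by (simp add: ac_simps)
  qed
  then have "gbinom n (int k) = ?g 0"
    unfolding gbinom_def by (rule Lim_at_eq_if_eventually_eq_isCont)
      (auto intro!: continuous_intros isCont_o2[OF _ isCont_pochhammer])
  also have "\<dots> = of_int n gchoose k"
    using rGamma_of_int[where 'a=real and n="int k + 1"]
    by (simp add: gbinomial_pochhammer' field_simps)
  finally show ?thesis by (simp add: of_int_int_binomial)
qed

lemma gbinom_eq_0:
  assumes "k < 0" and "n - k < 0"
  shows "gbinom n k = 0"
proof -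
  define j where "j = nat (- k)"
  have k: "k = - int j" using assms unfolding j_def by simp
  let ?g = "\<lambda>z::real. rGamma (z + of_int k + 1) / pochhammer (z + of_int n + 1) j"
  have "\<forall>\<^sub>F z in at 0. Gamma (z + of_int n + 1) / (Gamma (z + of_int k + 1)
          * Gamma (z + of_int n - of_int k + 1)) = ?g z"
    using eventually_at_zero_not_nonpos_Int[of "n + 1"]
  proof (rule eventually_mono)
    fix z :: real assume "z + of_int (n + 1) \<notin> \<int>\<^sub>\<le>\<^sub>0"
    then have "Gamma (z + of_int n + 1) \<noteq> 0"
      by (simp add: Gamma_eq_zero_iff add.assoc)
    moreover have "Gamma (z + of_int n - of_int k + 1)
        = pochhammer (z + of_int n + 1) j * Gamma (z + of_int n + 1)"
      using pochhammer_Gamma[OF \<open>z + of_int (n + 1) \<notin> \<int>\<^sub>\<le>\<^sub>0\<close>, of j] calculation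
      by (simp add: k algebra_simps)
    ultimately show "Gamma (z + of_int n + 1) / (Gamma (z + of_int k + 1)
          * Gamma (z + of_int n - of_int k + 1)) = ?g z"
      by (simp add: rGamma_inverse_Gamma field_simps)
  qed
  moreover have "pochhammer (of_int n + 1 :: real) j \<noteq> 0"
    using assms by (auto simp: pochhammer_eq_0_iff k)
  ultimately have "gbinom n k = ?g 0"
    unfolding gbinom_def by (intro Lim_at_eq_if_eventually_eq_isCont)
      (auto intro!: continuous_intros isCont_o2[OF _ isCont_pochhammer])
  also have "\<dots> = 0"
    using assms rGamma_of_int[where 'a=real and n="k + 1"] by simp
  finally show ?thesis .
qed

definition int_gbinom :: "int \<Rightarrow> int \<Rightarrow> int" where
  "int_gbinom n k =
     (if 0 \<le> k then int_binomial n (nat k)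
      else if 0 \<le> n - k then int_binomial n (nat (n - k)) else 0)"

lemma gbinom_eq_of_int_gbinom: "gbinom n k = of_int (int_gbinom n k)"
proof -
  consider "0 \<le> k" | "k < 0" "0 \<le> n - k" | "k < 0" "n - k < 0" by linarith
  then show ?thesis
  proof cases
    case 1
    then show ?thesis using gbinom_of_nat[of n "nat k"] by (simp add: int_gbinom_def)
  next
    case 2
    then show ?thesis
      using gbinom_of_nat[of n "nat (n - k)"] gbinom_sym[of n k] by (simp add: int_gbinom_def)
  next
    case 3
    then show ?thesis by (simp add: gbinom_eq_0 int_gbinom_def)
  qed
qed

lemma prod_atLeast1_atMost_split_multiples:
  fixes p k :: nat
  assumes "p > 0"
  shows "(\<Prod>j = 1..k. f j)
    = (\<Prod>j \<in> {j \<in> {1..k}. \<not> p dvd j}. f j) * (\<Prod>i = 1..k div p. f (p * i))"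
proof -
  have "{j \<in> {1..k}. p dvd j} = (\<lambda>i. p * i) ` {1..k div p}"
    using assms by (auto simp: less_eq_div_iff_mult_less_eq mult.commute elim!: dvdE)
  then have split: "{1..k} = {j \<in> {1..k}. \<not> p dvd j} \<union> (\<lambda>i. p * i) ` {1..k div p}"
    by blast
  have "(\<Prod>j \<in> (\<lambda>i. p * i) ` {1..k div p}. f j) = (\<Prod>i = 1..k div p. f (p * i))"
    using assms by (subst prod.reindex) (auto simp: inj_on_def)
  then show ?thesis
    by (subst split, subst prod.union_disjoint) auto
qed

lemma signed_int_binomial_cong:
  fixes p k :: nat and M :: int
  assumes p: "prime p" and dvd: "int p ^ r dvd int p * M"
  shows "[(-1) ^ k * int_binomial (int p * M - 1) k
          = (-1) ^ (k div p) * int_binomial (M - 1) (k div p)] (mod int p ^ r)"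
proof -
  define q where "q = k div p"
  define A where "A = {j \<in> {1..k}. \<not> p dvd j}"
  define a where "a = (-1) ^ k * int_binomial (int p * M - 1) k"
  define b where "b = (-1) ^ q * int_binomial (M - 1) q"
  have p0: "p > 0" using p by (simp add: prime_gt_0_nat)
  have "fact k = (\<Prod>j\<in>A. int j) * (int p ^ q * fact q)"
    using prod_atLeast1_atMost_split_multiples[OF p0, of int k]
    by (simp add: fact_prod A_def q_def prod.distrib)
  moreover have "fact k * a = (\<Prod>j\<in>A. int j - int p * M) * (int p ^ q * (fact q * b))"
    using prod_atLeast1_atMost_split_multiples[OF p0, of "\<lambda>j. int j - int p * M" k]
    unfolding a_def b_def fact_mult_signed_int_binomial
    by (simp add: A_def q_def prod.distrib flip: right_diff_distrib)
  ultimately have ab: "(\<Prod>j\<in>A. int j) * a = (\<Prod>j\<in>A. int j - int p * M) * b"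
    using p0 by (simp add: ac_simps)
  have "[(\<Prod>j\<in>A. int j - int p * M) = (\<Prod>j\<in>A. int j)] (mod int p ^ r)"
    using dvd by (intro cong_prod) (simp add: cong_iff_dvd_diff)
  then have "[(\<Prod>j\<in>A. int j) * a = (\<Prod>j\<in>A. int j) * b] (mod int p ^ r)"
    unfolding ab by (rule cong_scalar_right)
  moreover have "coprime (\<Prod>j\<in>A. int j) (int p ^ r)"
  proof -
    have "\<not> int p dvd (\<Prod>j\<in>A. int j)"
      using p by (simp add: A_def prime_dvd_prod_iff)
    then show ?thesis
      using p by (simp add: prime_imp_coprime coprime_commute)
  qed
  ultimately show ?thesis
    unfolding a_def b_def q_def by (simp add: cong_mult_lcancel)
qed

lemma minus_one_power_nat_abs: "(-1::int) ^ nat \<bar>a\<bar> = (if even a then 1 else -1)"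
  by (simp add: minus_one_power_iff even_nat_iff)

lemma minus_one_power_nat_abs_diff_of_nat:
  "(-1::int) ^ nat \<bar>a - int j\<bar> = (-1) ^ nat \<bar>a\<bar> * (-1) ^ j"
  by (simp add: minus_one_power_nat_abs minus_one_power_iff)

lemma minus_one_power_nat_abs_pred_cong:
  fixes p :: nat and M :: int
  assumes p: "prime p" and dvd: "int p ^ r dvd int p * M"
  shows "[(-1::int) ^ nat \<bar>int p * M - 1\<bar> = (-1) ^ nat \<bar>M - 1\<bar>] (mod int p ^ r)"
proof (cases "even p")
  case False
  then show ?thesis by (simp add: minus_one_power_nat_abs)
next
  case True
  then have "p = 2" using prime_odd_nat[OF p] prime_ge_2_nat[OF p] by presburger
  show ?thesis
  proof (cases "r \<le> 1")
    case True
    with \<open>p = 2\<close> have "int p ^ r dvd 2" by (auto simp: le_Suc_eq)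
    moreover have "[(-1::int) ^ nat \<bar>int p * M - 1\<bar> = (-1) ^ nat \<bar>M - 1\<bar>] (mod 2)"
      by (simp add: minus_one_power_nat_abs cong_iff_dvd_diff)
    ultimately show ?thesis by (rule cong_dvd_modulus[rotated])
  next
    case False
    then have "int p * 2 dvd int p * M"
      using \<open>p = 2\<close> dvd_trans[OF le_imp_power_dvd[of 2 r "int p"] dvd] by simp
    then have "even M" using p by (auto simp: prime_gt_0_nat)
    then show ?thesis using \<open>p = 2\<close> by (simp add: minus_one_power_nat_abs)
  qed
qed

lemma mult_minus_one_diff_div:
  fixes p M k :: int
  assumes "p > 0"
  shows "(p * M - 1 - k) div p = M - 1 - k div p"
proof (rule int_div_pos_eq)
  show "p * M - 1 - k = p * (M - 1 - k div p) + (p - 1 - k mod p)"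
    using div_mult_mod_eq[of k p] by (simp add: algebra_simps)
  show "0 \<le> p - 1 - k mod p" and "p - 1 - k mod p < p"
    using pos_mod_bound[of p k] pos_mod_sign[of p k] assms by linarith+
qed

lemma int_gbinom_signed_cong:
  fixes p :: nat and M k :: int
  assumes p: "prime p" and dvd: "int p ^ r dvd int p * M"
  shows "[int_gbinom (int p * M - 1) k * (-1) ^ nat \<bar>k\<bar>
          = int_gbinom (M - 1) (k div int p) * (-1) ^ nat \<bar>k div int p\<bar>] (mod int p ^ r)"
proof -
  define n where "n = int p * M - 1"
  have p0: "int p > 0" using p by (simp add: prime_gt_0_nat)
  have refl_div: "(n - k) div int p = M - 1 - k div int p"
    unfolding n_def using mult_minus_one_diff_div[OF p0] .
  consider (nonneg) j where "k = int j"
    | (reflected) j where "k < 0" "n - k = int j"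
    | (zero) "k < 0" "n - k < 0"
    by (metis linorder_not_le nonneg_int_cases)
  then show ?thesis
  proof cases
    case nonneg
    then have "k div int p = int (j div p)" by (simp add: zdiv_int)
    then show ?thesis
      using nonneg signed_int_binomial_cong[OF p dvd, of j]
      by (simp add: int_gbinom_def mult.commute)
  next
    case reflected
    have K: "k div int p < 0" "M - 1 - k div int p = int (j div p)"
      using reflected refl_div p0 by (simp_all add: zdiv_int pos_imp_zdiv_neg_iff flip: refl_div)
    have "int_gbinom n k * (-1) ^ nat \<bar>k\<bar>
        = (-1) ^ nat \<bar>n\<bar> * ((-1) ^ j * int_binomial n j)"
    proof -
      have "k = n - int j" using reflected by simp
      then have "(-1::int) ^ nat \<bar>k\<bar> = (-1) ^ nat \<bar>n\<bar> * (-1) ^ j"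
        by (simp only: minus_one_power_nat_abs_diff_of_nat)
      with reflected show ?thesis by (simp add: int_gbinom_def)
    qed
    also have "[\<dots> = (-1) ^ nat \<bar>M - 1\<bar> * ((-1) ^ (j div p) * int_binomial (M - 1) (j div p))]
        (mod int p ^ r)"
      using minus_one_power_nat_abs_pred_cong[OF p dvd] signed_int_binomial_cong[OF p dvd, of j]
      unfolding n_def by (rule cong_mult)
    also have "(-1) ^ nat \<bar>M - 1\<bar> * ((-1) ^ (j div p) * int_binomial (M - 1) (j div p))
        = int_gbinom (M - 1) (k div int p) * (-1) ^ nat \<bar>k div int p\<bar>"
    proof -
      have "k div int p = M - 1 - int (j div p)" using K by simp
      then have "(-1::int) ^ nat \<bar>k div int p\<bar> = (-1) ^ nat \<bar>M - 1\<bar> * (-1) ^ (j div p)"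
        by (simp only: minus_one_power_nat_abs_diff_of_nat)
      with K show ?thesis by (simp add: int_gbinom_def)
    qed
    finally show ?thesis unfolding n_def .
  next
    case zero
    then have "M - 1 - k div int p < 0" "k div int p < 0"
      using p0 by (simp_all add: pos_imp_zdiv_neg_iff flip: refl_div)
    then show ?thesis using zero by (simp add: int_gbinom_def n_def)
  qed
qed

theorem lemma5p4:
  fixes p m k :: int and r :: nat
  assumes "prime p" and "r \<ge> 1"
  shows "\<exists>t::int.
    gbinom (p ^ r * m - 1) k * (-1) ^ nat \<bar>k\<bar>
    - gbinom (p ^ (r - 1) * m - 1) \<lfloor>real_of_int k / real_of_int p\<rfloor>
        * (-1) ^ nat \<bar>\<lfloor>real_of_int k / real_of_int p\<rfloor>\<bar>
    = real_of_int (p ^ r * t)"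
proof -
  obtain P where pP: "p = int P"
    using prime_ge_0_int[OF assms(1)] nonneg_int_cases by blast
  with assms(1) have P: "prime P" by simp
  define M where "M = p ^ (r - 1) * m"
  have pM: "p ^ r * m = p * M"
    using assms(2) unfolding M_def by (cases r) simp_all
  have "int P ^ r dvd int P * M" unfolding pP[symmetric] pM[symmetric] by simp
  from int_gbinom_signed_cong[OF P this, of k] obtain t where t:
    "int_gbinom (p * M - 1) k * (-1) ^ nat \<bar>k\<bar>
       - int_gbinom (M - 1) (k div p) * (-1) ^ nat \<bar>k div p\<bar> = p ^ r * t"
    unfolding cong_iff_dvd_diff pP by (auto elim: dvdE)
  then show ?thesis
    unfolding floor_divide_of_int_eq pM M_def[symmetric] gbinom_eq_of_int_gbinom
    by (intro exI[of _ t]) (simp flip: t)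
qed

end
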